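(* Let $p\ge1$, $\tau\in(0,1)$, $c\in(0,+\infty)$, let $A:\mathbb{R}\to\mathbb{R}$ be convex, and let $\boldsymbol{x}\in\mathbb{R}^p$. For $\boldsymbol{w}\in\mathbb{R}^p$ define $\theta=\boldsymbol{w}^T\boldsymbol{x}$, $s_j=\mathrm{sgn}(w_j)$ (with $\mathrm{sgn}(0)=0$), $q_j=x_j(w_j+cs_j)$, $\theta_{j-}=\theta-q_j$, $\theta_{j+}=\theta+\frac{\tau}{1-\tau}q_j$, and $$\pi(\boldsymbol{w})=\tau\sum_{j=1}^{p}A(\theta_{j-})+(1-\tau)\sum_{j=1}^{p}A(\theta_{j+})-pA(\theta).$$ Then $\pi(\boldsymbol{w})\ge0$ for every $\boldsymbol{w}\in\mathbb{R}^p$.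
   Context: $\pi$ is the Shakeout regularizer of a generalized linear model with log-partition function $A$, Shakeout hyper-parameters $\tau$ and $c$, and feature vector $\boldsymbol{x}$. *)

theory Defs
  imports "HOL-Analysis.Analysis"
begin

definition shakeout_reg :: "(real \<Rightarrow> real) \<Rightarrow> real \<Rightarrow> real \<Rightarrow> real ^ 'p \<Rightarrow> real ^ 'p \<Rightarrow> real" where
  "shakeout_reg A tau c x w =
     (let theta = (\<Sum>j\<in>UNIV. w $ j * x $ j);
          q = (\<lambda>j. x $ j * (w $ j + c * sgn (w $ j)))
      in tau * (\<Sum>j\<in>UNIV. A (theta - q j))
         + (1 - tau) * (\<Sum>j\<in>UNIV. A (theta + tau / (1 - tau) * q j))
         - real CARD('p) * A theta)"

end

theory Submission
  imports Defs
begin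

text \<open>Each summand of the regularizer is a two-point Jensen gap: the points
  \<open>\<theta> - q\<^sub>j\<close> and \<open>\<theta> + \<tau>/(1-\<tau>) q\<^sub>j\<close>, weighted by \<open>\<tau>\<close> and \<open>1 - \<tau>\<close>, have mean \<open>\<theta>\<close>.
  Hence nonnegativity holds for any perturbations \<open>q\<^sub>j\<close>.\<close>

lemma convex_on_mean_preserving_split:
  fixes A :: "real \<Rightarrow> real" and tau t q :: real
  assumes "0 < tau" "tau < 1" "convex_on UNIV A"
  shows "A t \<le> tau * A (t - q) + (1 - tau) * A (t + tau / (1 - tau) * q)"
proof -
  have mean: "(1 - tau) * (t + tau / (1 - tau) * q) + tau * (t - q) = t"
    using assms(2) by (simp add: field_simps)
  have "A ((1 - tau) * (t + tau / (1 - tau) * q) + tau * (t - q))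
     \<le> (1 - tau) * A (t + tau / (1 - tau) * q) + tau * A (t - q)"
    using convex_onD[OF assms(3), of tau "t + tau / (1 - tau) * q" "t - q"] assms(1,2)
    by simp
  then show ?thesis
    unfolding mean by simp
qed

theorem proposition2:
  fixes A :: "real \<Rightarrow> real" and tau c :: real and x w :: "real ^ 'p"
  assumes "0 < tau" "tau < 1" "0 < c" "convex_on UNIV A"
  shows "shakeout_reg A tau c x w \<ge> 0"
proof -
  define theta where "theta = (\<Sum>j\<in>UNIV. w $ j * x $ j)"
  define q where "q = (\<lambda>j. x $ j * (w $ j + c * sgn (w $ j)))"
  have "(\<Sum>j\<in>(UNIV :: 'p set). A theta)
      \<le> (\<Sum>j\<in>UNIV. tau * A (theta - q j) + (1 - tau) * A (theta + tau / (1 - tau) * q j))"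
    by (intro sum_mono convex_on_mean_preserving_split assms(1,2,4))
  then show ?thesis
    unfolding shakeout_reg_def Let_def theta_def[symmetric] q_def[symmetric]
    by (simp add: sum.distrib sum_distrib_left)
qed

end
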